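(* Let $\Psi$ be a declarative context and $A, B, C$ types with $\Psi \vdash A\ \mathsf{type}$, $\Psi \vdash B\ \mathsf{type}$ and $\Psi \vdash C\ \mathsf{type}$. If $\Psi \vdash A \le^{\pm} B$ and $\Psi \vdash B \le^{\pm} C$ (same polarity $\pm$), then $\Psi \vdash A \le^{\pm} C$.
   Context: Sorts are $\kappa \in \{\mathsf{type}, \mathbb{N}\}$. Index terms/monotypes $\tau, t$ are built from $\mathbf{1}$, universal variables $\alpha$, binary connectives $\tau_1 \oplus \tau_2$ with $\oplus \in \{\to, +, \times\}$ (sort $\mathsf{type}$), and $\mathsf{zero}$, $\mathsf{succ}(t)$ (sort $\mathbb{N}$); $\Psi \vdash t : \kappa$ means $t$ has sort $\kappa$ with its variables declared in $\Psi$. Types are $A, B, C ::= \mathbf{1} \mid \alpha \mid A \oplus B \mid \forall \alpha{:}\kappa.\,A \mid \exists \alpha{:}\kappa.\,A \mid P \supset A \mid A \wedge P \mid \mathsf{Vec}\ t\ A$ with propositions $P ::= t = t'$. A declarative context $\Psi$ is a list of declarations including universal variables $\alpha:\kappa$; $\Psi \vdash A\ \mathsf{type}$ means all free variables of $A$ are declared in $\Psi$ at appropriate sorts. A type is positive if headed by $\exists$, negative if headed by $\forall$; nonpos = not positive, nonneg = not negative. Declarative subtyping $\Psi \vdash A \le^{\pm} B$ is inductively defined by: (Refl) if $\Psi \vdash A\ \mathsf{type}$ and $A$ is nonpos and nonneg then $\Psi \vdash A \le^{\pm} A$; ($\forall$L) $\Psi \vdash \tau : \kappa$ and $\Psi \vdash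 [\tau/\alpha]A \le^- B$ give $\Psi \vdash \forall\alpha{:}\kappa.A \le^- B$; ($\forall$R) $\Psi, \beta{:}\kappa \vdash A \le^- B$ gives $\Psi \vdash A \le^- \forall\beta{:}\kappa.B$; ($\exists$L) $\Psi, \alpha{:}\kappa \vdash A \le^+ B$ gives $\Psi \vdash \exists\alpha{:}\kappa.A \le^+ B$; ($\exists$R) $\Psi \vdash \tau:\kappa$ and $\Psi \vdash A \le^+ [\tau/\beta]B$ give $\Psi \vdash A \le^+ \exists\beta{:}\kappa.B$; ($-{+}$) $\Psi \vdash A \le^- B$ with $A,B$ nonpos gives $\Psi \vdash A \le^+ B$; ($+{-}$) $\Psi \vdash A \le^+ B$ with $A,B$ nonneg gives $\Psi \vdash A \le^- B$. *)

theory Defs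
  imports Main
begin

text \<open>Locally de Bruijn representation of the declarative system.
  Type variables are de Bruijn indices counting universal declarations
  from the right end (most recent declaration = index 0) of the context.\<close>

datatype sort = SType | SNat

datatype binop = Arrow | Sum | Prod

text \<open>Types, monotypes and index terms share one syntax (as in the paper,
  monotypes/index terms are a sublanguage; which expressions are index terms
  of which sort is determined by the sorting judgment).\<close>
datatype ty =
    Unit
  | TVar nat
  | Bin binop ty ty
  | All sort ty
  | Ex sort ty
  | Impl prp ty
  | With ty prp
  | Vec ty ty
  | Zero
  | Succ ty
and prp = PEq ty ty

datatype decl = DUniv sort | DVar string ty

type_synonym ctx = "decl list"

fun ulookup :: "ctx \<Rightarrow> nat \<Rightarrow> sort option" where
  "ulookup [] n = None"
| "ulookup (DUniv k # \<Psi>) 0 = Some k"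
| "ulookup (DUniv k # \<Psi>) (Suc n) = ulookup \<Psi> n"
| "ulookup (DVar x A # \<Psi>) n = ulookup \<Psi> n"

fun lift :: "nat \<Rightarrow> ty \<Rightarrow> ty" and lift_prop :: "nat \<Rightarrow> prp \<Rightarrow> prp" where
  "lift c Unit = Unit"
| "lift c (TVar n) = TVar (if n < c then n else Suc n)"
| "lift c (Bin op A B) = Bin op (lift c A) (lift c B)"
| "lift c (All k A) = All k (lift (Suc c) A)"
| "lift c (Ex k A) = Ex k (lift (Suc c) A)"
| "lift c (Impl P A) = Impl (lift_prop c P) (lift c A)"
| "lift c (With A P) = With (lift c A) (lift_prop c P)"
| "lift c (Vec t A) = Vec (lift c t) (lift c A)"
| "lift c Zero = Zero"
| "lift c (Succ t) = Succ (lift c t)"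
| "lift_prop c (PEq t t') = PEq (lift c t) (lift c t')"

text \<open>Capture-avoiding substitution [s/k]A: replaces variable k by s and
  lowers the variables above k (the binder of k is removed).\<close>
fun subst :: "nat \<Rightarrow> ty \<Rightarrow> ty \<Rightarrow> ty" and subst_prop :: "nat \<Rightarrow> ty \<Rightarrow> prp \<Rightarrow> prp" where
  "subst k s Unit = Unit"
| "subst k s (TVar n) = (if n < k then TVar n else if n = k then s else TVar (n - 1))"
| "subst k s (Bin op A B) = Bin op (subst k s A) (subst k s B)"
| "subst k s (All j A) = All j (subst (Suc k) (lift 0 s) A)"
| "subst k s (Ex j A) = Ex j (subst (Suc k) (lift 0 s) A)"
| "subst k s (Impl P A) = Impl (subst_prop k s P) (subst k s A)"
| "subst k s (With A P) = With (subst k s A) (subst_prop k s P)"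
| "subst k s (Vec t A) = Vec (subst k s t) (subst k s A)"
| "subst k s Zero = Zero"
| "subst k s (Succ t) = Succ (subst k s t)"
| "subst_prop k s (PEq t t') = PEq (subst k s t) (subst k s t')"

inductive has_sort :: "ctx \<Rightarrow> ty \<Rightarrow> sort \<Rightarrow> bool" where
  SUnit: "has_sort \<Psi> Unit SType"
| SVar: "ulookup \<Psi> n = Some k \<Longrightarrow> has_sort \<Psi> (TVar n) k"
| SBin: "has_sort \<Psi> t1 SType \<Longrightarrow> has_sort \<Psi> t2 SType \<Longrightarrow> has_sort \<Psi> (Bin op t1 t2) SType"
| SZero: "has_sort \<Psi> Zero SNat"
| SSucc: "has_sort \<Psi> t SNat \<Longrightarrow> has_sort \<Psi> (Succ t) SNat"

inductive wf_prop :: "ctx \<Rightarrow> prp \<Rightarrow> bool" where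
  "has_sort \<Psi> t k \<Longrightarrow> has_sort \<Psi> t' k \<Longrightarrow> wf_prop \<Psi> (PEq t t')"

inductive wf_type :: "ctx \<Rightarrow> ty \<Rightarrow> bool" where
  WUnit: "wf_type \<Psi> Unit"
| WVar: "ulookup \<Psi> n = Some SType \<Longrightarrow> wf_type \<Psi> (TVar n)"
| WBin: "wf_type \<Psi> A \<Longrightarrow> wf_type \<Psi> B \<Longrightarrow> wf_type \<Psi> (Bin op A B)"
| WAll: "wf_type (DUniv k # \<Psi>) A \<Longrightarrow> wf_type \<Psi> (All k A)"
| WEx: "wf_type (DUniv k # \<Psi>) A \<Longrightarrow> wf_type \<Psi> (Ex k A)"
| WImpl: "wf_prop \<Psi> P \<Longrightarrow> wf_type \<Psi> A \<Longrightarrow> wf_type \<Psi> (Impl P A)"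
| WWith: "wf_type \<Psi> A \<Longrightarrow> wf_prop \<Psi> P \<Longrightarrow> wf_type \<Psi> (With A P)"
| WVec: "has_sort \<Psi> t SNat \<Longrightarrow> wf_type \<Psi> A \<Longrightarrow> wf_type \<Psi> (Vec t A)"

fun positive :: "ty \<Rightarrow> bool" where
  "positive (Ex k A) = True"
| "positive _ = False"

fun negative :: "ty \<Rightarrow> bool" where
  "negative (All k A) = True"
| "negative _ = False"

datatype polarity = Pos | Neg

inductive subtype :: "ctx \<Rightarrow> polarity \<Rightarrow> ty \<Rightarrow> ty \<Rightarrow> bool" where
  Refl: "wf_type \<Psi> A \<Longrightarrow> \<not> positive A \<Longrightarrow> \<not> negative A \<Longrightarrow> subtype \<Psi> p A A"
| AllL: "has_sort \<Psi> \<tau> k \<Longrightarrow> subtype \<Psi> Neg (subst 0 \<tau> A) B \<Longrightarrow> subtype \<Psi> Neg (All k A) B"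
| AllR: "subtype (DUniv k # \<Psi>) Neg (lift 0 A) B \<Longrightarrow> subtype \<Psi> Neg A (All k B)"
| ExL: "subtype (DUniv k # \<Psi>) Pos A (lift 0 B) \<Longrightarrow> subtype \<Psi> Pos (Ex k A) B"
| ExR: "has_sort \<Psi> \<tau> k \<Longrightarrow> subtype \<Psi> Pos A (subst 0 \<tau> B) \<Longrightarrow> subtype \<Psi> Pos A (Ex k B)"
| NegPos: "subtype \<Psi> Neg A B \<Longrightarrow> \<not> positive A \<Longrightarrow> \<not> positive B \<Longrightarrow> subtype \<Psi> Pos A B"
| PosNeg: "subtype \<Psi> Pos A B \<Longrightarrow> \<not> negative A \<Longrightarrow> \<not> negative B \<Longrightarrow> subtype \<Psi> Neg A B"

end

theory Submission
  imports Defs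
begin

text \<open>Transitivity is proved by induction on the total number of quantifiers in A, B and C,
  with an inner induction on the derivation of A \<le> B and inversion of B \<le> C.
  Instantiating a quantifier substitutes an index term, which is quantifier-free, so each
  principal cut (\<forall>R against \<forall>L, \<exists>R against \<exists>L) becomes a cut through an instance with
  fewer quantifiers; the remaining cases move the cut into a premise, where the measure
  drops as well. The principal cuts need that subtyping is stable under substitution of
  index terms, and moving a cut under a binder needs weakening.\<close>

fun quantifiers :: "ty \<Rightarrow> nat" where
  "quantifiers (All k A) = Suc (quantifiers A)"
| "quantifiers (Ex k A) = Suc (quantifiers A)"
| "quantifiers (Bin op A B) = quantifiers A + quantifiers B"
| "quantifiers (Impl P A) = quantifiers A"
| "quantifiers (With A P) = quantifiers A"
| "quantifiers (Vec t A) = quantifiers t + quantifiers A"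
| "quantifiers (Succ t) = quantifiers t"
| "quantifiers _ = 0"

lemma quantifiers_lift [simp]: "quantifiers (lift c A) = quantifiers A"
  by (induction A arbitrary: c) auto

lemma quantifiers_subst [simp]: "quantifiers s = 0 \<Longrightarrow> quantifiers (subst j s A) = quantifiers A"
  by (induction A arbitrary: j s) auto

lemma positive_lift [simp]: "positive (lift c A) = positive A"
  and negative_lift [simp]: "negative (lift c A) = negative A"
  by (cases A; simp)+

lemma not_positive_subst: "\<not> positive s \<Longrightarrow> \<not> positive A \<Longrightarrow> \<not> positive (subst j s A)"
  and not_negative_subst: "\<not> negative s \<Longrightarrow> \<not> negative A \<Longrightarrow> \<not> negative (subst j s A)"
  by (cases A; simp)+

subsection \<open>Lifting and substitution\<close>

lemma subst_lift [simp]: "subst c s (lift c A) = A"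
  and subst_prop_lift_prop [simp]: "subst_prop c s (lift_prop c P) = P"
  by (induction A and P arbitrary: c s and c s) auto

lemma lift_lift: "c \<le> d \<Longrightarrow> lift (Suc d) (lift c A) = lift c (lift d A)"
  and lift_prop_lift_prop: "c \<le> d \<Longrightarrow> lift_prop (Suc d) (lift_prop c P) = lift_prop c (lift_prop d P)"
  by (induction A and P arbitrary: c d and c d) auto

lemma lift_Suc_lift_0 [simp]: "lift (Suc d) (lift 0 A) = lift 0 (lift d A)"
  by (simp add: lift_lift)

lemma lift_subst_above:
    "j \<le> c \<Longrightarrow> lift c (subst j t A) = subst j (lift c t) (lift (Suc c) A)"
  and lift_prop_subst_prop_above:
    "j \<le> c \<Longrightarrow> lift_prop c (subst_prop j t P) = subst_prop j (lift c t) (lift_prop (Suc c) P)"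
  by (induction A and P arbitrary: j c t and j c t) auto

lemma lift_subst_below:
    "c \<le> j \<Longrightarrow> lift c (subst j s A) = subst (Suc j) (lift c s) (lift c A)"
  and lift_prop_subst_prop_below:
    "c \<le> j \<Longrightarrow> lift_prop c (subst_prop j s P) = subst_prop (Suc j) (lift c s) (lift_prop c P)"
  by (induction A and P arbitrary: j c s and j c s) auto

lemma subst_subst:
    "i \<le> j \<Longrightarrow> subst j s (subst i t A) = subst i (subst j s t) (subst (Suc j) (lift i s) A)"
  and subst_prop_subst_prop:
    "i \<le> j \<Longrightarrow> subst_prop j s (subst_prop i t P)
      = subst_prop i (subst j s t) (subst_prop (Suc j) (lift i s) P)"
  by (induction A and P arbitrary: i j s t and i j s t) (auto simp: lift_subst_below)

subsection \<open>Weakening\<close>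

text \<open>ctx_insert c \<Psi> \<Psi>' says that \<Psi>' is \<Psi> with one universal declaration inserted at
  de Bruijn position c, the context change matching lift c.\<close>

definition ctx_insert :: "nat \<Rightarrow> ctx \<Rightarrow> ctx \<Rightarrow> bool" where
  "ctx_insert c \<Psi> \<Psi>' \<longleftrightarrow> (\<forall>n. ulookup \<Psi>' (if n < c then n else Suc n) = ulookup \<Psi> n)"

lemma ctx_insert_0: "ctx_insert 0 \<Psi> (DUniv k # \<Psi>)"
  unfolding ctx_insert_def by simp

lemma ctx_insert_Cons:
  assumes "ctx_insert c \<Psi> \<Psi>'"
  shows "ctx_insert (Suc c) (DUniv k # \<Psi>) (DUniv k # \<Psi>')"
  unfolding ctx_insert_def
proof
  fix n
  show "ulookup (DUniv k # \<Psi>') (if n < Suc c then n else Suc n) = ulookup (DUniv k # \<Psi>) n"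
    using assms[unfolded ctx_insert_def, rule_format, of "n - 1"]
    by (cases n) (auto split: if_splits)
qed

lemma has_sort_lift: "has_sort \<Psi> t k \<Longrightarrow> ctx_insert c \<Psi> \<Psi>' \<Longrightarrow> has_sort \<Psi>' (lift c t) k"
proof (induction rule: has_sort.induct)
  case (SVar \<Psi> n k)
  then have "ulookup \<Psi>' (if n < c then n else Suc n) = Some k"
    unfolding ctx_insert_def by metis
  then show ?case by (auto intro: has_sort.SVar)
qed (auto intro: has_sort.intros)

lemma wf_prop_lift: "wf_prop \<Psi> P \<Longrightarrow> ctx_insert c \<Psi> \<Psi>' \<Longrightarrow> wf_prop \<Psi>' (lift_prop c P)"
  by (induction rule: wf_prop.induct) (auto intro: wf_prop.intros has_sort_lift)

lemma wf_type_lift: "wf_type \<Psi> A \<Longrightarrow> ctx_insert c \<Psi> \<Psi>' \<Longrightarrow> wf_type \<Psi>' (lift c A)"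
proof (induction arbitrary: c \<Psi>' rule: wf_type.induct)
  case (WVar \<Psi> n)
  then have "ulookup \<Psi>' (if n < c then n else Suc n) = Some SType"
    unfolding ctx_insert_def by metis
  then show ?case by (auto intro: wf_type.WVar)
qed (auto intro!: wf_type.intros wf_prop_lift has_sort_lift ctx_insert_Cons)

lemma subtype_lift:
  "subtype \<Psi> p A B \<Longrightarrow> ctx_insert c \<Psi> \<Psi>' \<Longrightarrow> subtype \<Psi>' p (lift c A) (lift c B)"
proof (induction arbitrary: c \<Psi>' rule: subtype.induct)
  case (Refl \<Psi> A p)
  then show ?case by (auto intro!: subtype.Refl wf_type_lift)
next
  case (AllL \<Psi> \<tau> k A B)
  then have "subtype \<Psi>' Neg (subst 0 (lift c \<tau>) (lift (Suc c) A)) (lift c B)"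
    using AllL.IH[OF AllL.prems] lift_subst_above[of 0 c \<tau> A] by simp
  with AllL show ?case by (auto intro!: subtype.AllL has_sort_lift)
next
  case (AllR k \<Psi> A B)
  then have "subtype (DUniv k # \<Psi>') Neg (lift (Suc c) (lift 0 A)) (lift (Suc c) B)"
    using AllR.IH[OF ctx_insert_Cons[OF AllR.prems]] by simp
  then show ?case by (auto intro!: subtype.AllR)
next
  case (ExL k \<Psi> A B)
  then have "subtype (DUniv k # \<Psi>') Pos (lift (Suc c) A) (lift (Suc c) (lift 0 B))"
    using ExL.IH[OF ctx_insert_Cons[OF ExL.prems]] by simp
  then show ?case by (auto intro!: subtype.ExL)
next
  case (ExR \<Psi> \<tau> k A B)
  then have "subtype \<Psi>' Pos (lift c A) (subst 0 (lift c \<tau>) (lift (Suc c) B))"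
    using ExR.IH[OF ExR.prems] lift_subst_above[of 0 c \<tau> B] by simp
  with ExR show ?case by (auto intro!: subtype.ExR has_sort_lift)
next
  case (NegPos \<Psi> A B)
  then show ?case by (auto intro!: subtype.NegPos)
next
  case (PosNeg \<Psi> A B)
  then show ?case by (auto intro!: subtype.PosNeg)
qed

subsection \<open>Substitution of index terms\<close>

text \<open>ctx_drop j k \<Gamma> \<Psi> says that \<Gamma> declares variable j at sort k and \<Psi> is \<Gamma> without
  that declaration, the context change matching subst j.\<close>

definition ctx_drop :: "nat \<Rightarrow> sort \<Rightarrow> ctx \<Rightarrow> ctx \<Rightarrow> bool" where
  "ctx_drop j k \<Gamma> \<Psi> \<longleftrightarrow> ulookup \<Gamma> j = Some k \<and> (\<forall>n<j. ulookup \<Gamma> n = ulookup \<Psi> n)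
     \<and> (\<forall>n>j. ulookup \<Gamma> n = ulookup \<Psi> (n - 1))"

lemma ctx_drop_0: "ctx_drop 0 k (DUniv k # \<Psi>) \<Psi>"
  unfolding ctx_drop_def by (auto simp: gr0_conv_Suc)

lemma ctx_drop_Cons: "ctx_drop j k \<Gamma> \<Psi> \<Longrightarrow> ctx_drop (Suc j) k (DUniv k' # \<Gamma>) (DUniv k' # \<Psi>)"
  unfolding ctx_drop_def
proof (intro conjI allI impI; (elim conjE)?)
  fix n
  assume drop: "ulookup \<Gamma> j = Some k" "\<forall>n<j. ulookup \<Gamma> n = ulookup \<Psi> n"
    "\<forall>n>j. ulookup \<Gamma> n = ulookup \<Psi> (n - 1)"
  show "ulookup (DUniv k' # \<Gamma>) (Suc j) = Some k" using drop by simp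
  show "n < Suc j \<Longrightarrow> ulookup (DUniv k' # \<Gamma>) n = ulookup (DUniv k' # \<Psi>) n"
    using drop by (cases n) auto
  show "Suc j < n \<Longrightarrow> ulookup (DUniv k' # \<Gamma>) n = ulookup (DUniv k' # \<Psi>) (n - 1)"
    using drop by (cases n; cases "n - 1") auto
qed

lemma has_sort_subst:
  "has_sort \<Gamma> t k' \<Longrightarrow> ctx_drop j k \<Gamma> \<Psi> \<Longrightarrow> has_sort \<Psi> s k \<Longrightarrow> has_sort \<Psi> (subst j s t) k'"
proof (induction rule: has_sort.induct)
  case (SVar \<Gamma> n k')
  then show ?case by (auto simp: ctx_drop_def intro!: has_sort.SVar)
qed (auto intro: has_sort.intros)

lemma wf_prop_subst:
  "wf_prop \<Gamma> P \<Longrightarrow> ctx_drop j k \<Gamma> \<Psi> \<Longrightarrow> has_sort \<Psi> s k \<Longrightarrow> wf_prop \<Psi> (subst_prop j s P)"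
  by (induction rule: wf_prop.induct) (auto intro: wf_prop.intros has_sort_subst)

lemma has_sort_quantifiers: "has_sort \<Psi> t k \<Longrightarrow> quantifiers t = 0"
  by (induction rule: has_sort.induct) auto

lemma has_sort_neither_positive_nor_negative:
  "has_sort \<Psi> t k \<Longrightarrow> \<not> positive t \<and> \<not> negative t"
  by (induction rule: has_sort.induct) auto

lemma has_sort_SType_wf_type: "has_sort \<Psi> t SType \<Longrightarrow> wf_type \<Psi> t"
  by (induction \<Psi> t "SType" rule: has_sort.induct) (auto intro: wf_type.intros)

lemma wf_type_subst:
  "wf_type \<Gamma> A \<Longrightarrow> ctx_drop j k \<Gamma> \<Psi> \<Longrightarrow> has_sort \<Psi> s k \<Longrightarrow> wf_type \<Psi> (subst j s A)"
proof (induction arbitrary: j \<Psi> s rule: wf_type.induct)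
  case (WVar \<Gamma> n)
  then show ?case
    by (cases "n = j") (auto simp: ctx_drop_def intro: has_sort_SType_wf_type wf_type.WVar)
qed (auto intro!: wf_type.intros wf_prop_subst has_sort_subst ctx_drop_Cons has_sort_lift ctx_insert_0)

lemma wf_type_instantiate:
  "wf_type (DUniv k # \<Psi>) A \<Longrightarrow> has_sort \<Psi> \<tau> k \<Longrightarrow> wf_type \<Psi> (subst 0 \<tau> A)"
  using wf_type_subst ctx_drop_0 by blast

lemma subtype_subst:
  "subtype \<Gamma> p A B \<Longrightarrow> ctx_drop j k \<Gamma> \<Psi> \<Longrightarrow> has_sort \<Psi> s k
   \<Longrightarrow> subtype \<Psi> p (subst j s A) (subst j s B)"
proof (induction arbitrary: j \<Psi> s rule: subtype.induct)
  case (Refl \<Gamma> A p)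
  then show ?case
    using has_sort_neither_positive_nor_negative not_positive_subst not_negative_subst
    by (auto intro!: subtype.Refl wf_type_subst)
next
  case (AllL \<Gamma> \<tau> k' A B)
  then have "subtype \<Psi> Neg (subst 0 (subst j s \<tau>) (subst (Suc j) (lift 0 s) A)) (subst j s B)"
    using AllL.IH[OF AllL.prems] subst_subst[of 0 j s \<tau> A] by simp
  with AllL show ?case by (auto intro!: subtype.AllL has_sort_subst)
next
  case (AllR k' \<Gamma> A B)
  have "subtype (DUniv k' # \<Psi>) Neg (subst (Suc j) (lift 0 s) (lift 0 A))
      (subst (Suc j) (lift 0 s) B)"
    using AllR.IH[OF ctx_drop_Cons[OF AllR.prems(1)] has_sort_lift[OF AllR.prems(2) ctx_insert_0]] .
  then show ?case using lift_subst_below[of 0 j s A] by (auto intro!: subtype.AllR)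
next
  case (ExL k' \<Gamma> A B)
  have "subtype (DUniv k' # \<Psi>) Pos (subst (Suc j) (lift 0 s) A)
      (subst (Suc j) (lift 0 s) (lift 0 B))"
    using ExL.IH[OF ctx_drop_Cons[OF ExL.prems(1)] has_sort_lift[OF ExL.prems(2) ctx_insert_0]] .
  then show ?case using lift_subst_below[of 0 j s B] by (auto intro!: subtype.ExL)
next
  case (ExR \<Gamma> \<tau> k' A B)
  then have "subtype \<Psi> Pos (subst j s A) (subst 0 (subst j s \<tau>) (subst (Suc j) (lift 0 s) B))"
    using ExR.IH[OF ExR.prems] subst_subst[of 0 j s \<tau> B] by simp
  with ExR show ?case by (auto intro!: subtype.ExR has_sort_subst)
next
  case (NegPos \<Gamma> A B)
  then show ?case
    using has_sort_neither_positive_nor_negative[OF NegPos.prems(2)] not_positive_subst[of s A j] not_positive_subst[of s B j]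
    by (auto intro!: subtype.NegPos)
next
  case (PosNeg \<Gamma> A B)
  then show ?case
    using has_sort_neither_positive_nor_negative[OF PosNeg.prems(2)] not_negative_subst[of s A j] not_negative_subst[of s B j]
    by (auto intro!: subtype.PosNeg)
qed

subsection \<open>Transitivity\<close>

inductive_cases wf_type_AllE: "wf_type \<Psi> (All k A)"
inductive_cases wf_type_ExE: "wf_type \<Psi> (Ex k A)"

definition subtype_trans_below :: "nat \<Rightarrow> bool" where
  "subtype_trans_below n \<longleftrightarrow> (\<forall>\<Psi> p A B C. quantifiers A + quantifiers B + quantifiers C < n
     \<longrightarrow> wf_type \<Psi> A \<longrightarrow> wf_type \<Psi> B \<longrightarrow> wf_type \<Psi> C
     \<longrightarrow> subtype \<Psi> p A B \<longrightarrow> subtype \<Psi> p B C \<longrightarrow> subtype \<Psi> p A C)"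

lemma subtype_trans_belowD:
  "subtype_trans_below n \<Longrightarrow> quantifiers A + quantifiers B + quantifiers C < n
   \<Longrightarrow> wf_type \<Psi> A \<Longrightarrow> wf_type \<Psi> B \<Longrightarrow> wf_type \<Psi> C
   \<Longrightarrow> subtype \<Psi> p A B \<Longrightarrow> subtype \<Psi> p B C \<Longrightarrow> subtype \<Psi> p A C"
  unfolding subtype_trans_below_def by blast

lemma subtype_trans_AllR:
  assumes trans: "subtype_trans_below (quantifiers A + quantifiers B + quantifiers (All k C))"
    and wf: "wf_type \<Psi> A" "wf_type \<Psi> B" "wf_type \<Psi> (All k C)"
    and AB: "subtype \<Psi> Neg A B" and BC: "subtype (DUniv k # \<Psi>) Neg (lift 0 B) C"
  shows "subtype \<Psi> Neg A (All k C)"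
proof -
  have "subtype (DUniv k # \<Psi>) Neg (lift 0 A) (lift 0 B)"
    using subtype_lift[OF AB ctx_insert_0] .
  moreover have "wf_type (DUniv k # \<Psi>) C" using wf(3) by (rule wf_type_AllE)
  ultimately have "subtype (DUniv k # \<Psi>) Neg (lift 0 A) C"
    using subtype_trans_belowD[OF trans, of "lift 0 A" "lift 0 B" C] BC wf
      wf_type_lift[OF _ ctx_insert_0] by auto
  then show ?thesis by (rule subtype.AllR)
qed

lemma subtype_trans_ExR:
  assumes trans: "subtype_trans_below (quantifiers A + quantifiers B + quantifiers (Ex k C))"
    and wf: "wf_type \<Psi> A" "wf_type \<Psi> B" "wf_type \<Psi> (Ex k C)"
    and AB: "subtype \<Psi> Pos A B"
    and \<tau>: "has_sort \<Psi> \<tau> k" and BC: "subtype \<Psi> Pos B (subst 0 \<tau> C)"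
  shows "subtype \<Psi> Pos A (Ex k C)"
proof -
  have "wf_type \<Psi> (subst 0 \<tau> C)"
    using wf(3) \<tau> by (blast elim: wf_type_ExE intro: wf_type_instantiate)
  then have "subtype \<Psi> Pos A (subst 0 \<tau> C)"
    using subtype_trans_belowD[OF trans, of A B "subst 0 \<tau> C"] AB BC wf has_sort_quantifiers[OF \<tau>]
    by auto
  then show ?thesis by (rule subtype.ExR[OF \<tau>])
qed

lemma subtype_trans_step:
  "subtype \<Psi> p A B \<Longrightarrow> subtype_trans_below (quantifiers A + quantifiers B + quantifiers C)
   \<Longrightarrow> wf_type \<Psi> A \<Longrightarrow> wf_type \<Psi> B \<Longrightarrow> wf_type \<Psi> C
   \<Longrightarrow> subtype \<Psi> p B C \<Longrightarrow> subtype \<Psi> p A C"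
proof (induction arbitrary: C rule: subtype.induct)
  case (Refl \<Psi> A p)
  then show ?case by simp
next
  case (AllL \<Psi> \<tau> k A B)
  have "wf_type \<Psi> (subst 0 \<tau> A)"
    using AllL.prems(2) AllL.hyps(1) by (blast elim: wf_type_AllE intro: wf_type_instantiate)
  then have "subtype \<Psi> Neg (subst 0 \<tau> A) C"
    using subtype_trans_belowD[OF AllL.prems(1), of "subst 0 \<tau> A" B C] AllL
      has_sort_quantifiers[OF AllL.hyps(1)] by auto
  then show ?case by (rule subtype.AllL[OF AllL.hyps(1)])
next
  case (AllR k \<Psi> A B)
  from AllR.prems(5) show ?case
  proof cases
    case (AllL \<tau>)
    have "subtype \<Psi> Neg A (subst 0 \<tau> B)"
      using subtype_subst[OF AllR.hyps(1) ctx_drop_0 AllL(1)] by simp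
    moreover have "wf_type \<Psi> (subst 0 \<tau> B)"
      using AllR.prems(3) AllL(1) by (blast elim: wf_type_AllE intro: wf_type_instantiate)
    ultimately show ?thesis
      using subtype_trans_belowD[OF AllR.prems(1), of A "subst 0 \<tau> B" C] AllL(2) AllR.prems
        has_sort_quantifiers[OF AllL(1)] by auto
  next
    case (AllR k' C')
    then show ?thesis
      using subtype_trans_AllR[of A "All k B" k' C' \<Psi>] AllR.prems subtype.AllR[OF AllR.hyps(1)]
      by auto
  qed auto
next
  case (ExL k \<Psi> A B)
  have "wf_type (DUniv k # \<Psi>) A" using ExL.prems(2) by (rule wf_type_ExE)
  moreover have "subtype (DUniv k # \<Psi>) Pos (lift 0 B) (lift 0 C)"
    using subtype_lift[OF ExL.prems(5) ctx_insert_0] .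
  ultimately have "subtype (DUniv k # \<Psi>) Pos A (lift 0 C)"
    using subtype_trans_belowD[OF ExL.prems(1), of A "lift 0 B" "lift 0 C"] ExL.hyps(1) ExL.prems
      wf_type_lift[OF _ ctx_insert_0] by auto
  then show ?case by (rule subtype.ExL)
next
  case (ExR \<Psi> \<tau> k A B)
  from ExR.prems(5) show ?case
  proof cases
    case ExL
    have "subtype \<Psi> Pos (subst 0 \<tau> B) C"
      using subtype_subst[OF ExL ctx_drop_0 ExR.hyps(1)] by simp
    moreover have "wf_type \<Psi> (subst 0 \<tau> B)"
      using ExR.prems(3) ExR.hyps(1) by (blast elim: wf_type_ExE intro: wf_type_instantiate)
    ultimately show ?thesis
      using subtype_trans_belowD[OF ExR.prems(1), of A "subst 0 \<tau> B" C] ExR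
        has_sort_quantifiers[OF ExR.hyps(1)] by auto
  next
    case (ExR \<tau>' k' C')
    then show ?thesis
      using subtype_trans_ExR[of A "Ex k B" k' C' \<Psi> \<tau>'] ExR.prems subtype.ExR[OF ExR.hyps(1,2)]
      by auto
  qed auto
next
  case (NegPos \<Psi> A B)
  from NegPos.prems(5) show ?case
  proof cases
    case (ExR \<tau>' k' C')
    then show ?thesis
      using subtype_trans_ExR[of A B k' C' \<Psi> \<tau>'] NegPos subtype.NegPos[OF NegPos.hyps] by auto
  qed (use NegPos in \<open>auto intro: subtype.NegPos\<close>)
next
  case (PosNeg \<Psi> A B)
  from PosNeg.prems(5) show ?case
  proof cases
    case (AllR k' C')
    then show ?thesis
      using subtype_trans_AllR[of A B k' C' \<Psi>] PosNeg subtype.PosNeg[OF PosNeg.hyps] by auto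
  qed (use PosNeg in \<open>auto intro: subtype.PosNeg\<close>)
qed

lemma subtype_trans_below_all: "subtype_trans_below n"
proof (induction n)
  case 0
  then show ?case by (simp add: subtype_trans_below_def)
next
  case (Suc n)
  show ?case
    unfolding subtype_trans_below_def
  proof (intro allI impI)
    fix \<Psi> p A B C
    assume size: "quantifiers A + quantifiers B + quantifiers C < Suc n"
      and typing: "wf_type \<Psi> A" "wf_type \<Psi> B" "wf_type \<Psi> C"
        "subtype \<Psi> p A B" "subtype \<Psi> p B C"
    show "subtype \<Psi> p A C"
    proof (cases "quantifiers A + quantifiers B + quantifiers C < n")
      case True
      then show ?thesis using subtype_trans_belowD[OF Suc.IH] typing by blast
    next
      case False
      with size have "quantifiers A + quantifiers B + quantifiers C = n" by simp
      with Suc.IH have "subtype_trans_below (quantifiers A + quantifiers B + quantifiers C)"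
        by simp
      then show ?thesis using subtype_trans_step typing by blast
    qed
  qed
qed

theorem mainTheorem4:
  assumes "wf_type \<Psi> A" and "wf_type \<Psi> B" and "wf_type \<Psi> C"
    and "subtype \<Psi> p A B" and "subtype \<Psi> p B C"
  shows "subtype \<Psi> p A C"
  using subtype_trans_belowD[OF subtype_trans_below_all] assms by blast

end
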